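(* Let $n\ge 3$, let $x_1,\dots,x_n$ be distinct points of $\mathbb{CP}^1$, and let $E = \mathcal{O}(1)\oplus\mathcal{O}(n-1)$ over $\mathbb{CP}^1$. Consider tuples $\mathbf{F} = \{F_1,\dots,F_n\}$ of complex lines $F_i \subset E_{x_i}$ (where $E_x$ is the fibre of $E$ at $x$) satisfying: (i) $F_i \cap \mathcal{O}(n-1)_{x_i} = 0$ for all $i$, where $\mathcal{O}(n-1)$ is the second direct summand of $E$; (ii) there is no holomorphic line subbundle $L\subset E$ of degree $1$ with $F_i \subset L_{x_i}$ for all $i$. Then such tuples exist, and any two such tuples are related by the action of a holomorphic automorphism of $E$; i.e. up to the action of $\mathrm{Aut}(E)$ there is a unique such tuple.
   Context: $\mathrm{Aut}(E)$ is the group of holomorphic vector bundle automorphisms of $E$, acting on tuples of lines in the fibres $E_{x_1},\dots,E_{x_n}$ in the obvious way. *)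

theory Defs
  imports Complex_Main
begin

text \<open>A point of CP^1 is represented by a nonzero vector z in C^2; over the representative z the
fibre of O(k) is identified with C so that a global section of O(k) is a homogeneous
polynomial of degree k in (s,t) (zero if k < 0), and the fibre of E is identified with C^2
(first coordinate: the summand O(1), second: the summand O(n-1)).\<close>

type_synonym pt = "complex \<times> complex"

definition proj_eq :: "pt \<Rightarrow> pt \<Rightarrow> bool" where
  "proj_eq z w \<longleftrightarrow> (\<exists>l::complex. l \<noteq> 0 \<and> w = (l * fst z, l * snd z))"

definition hpoly :: "int \<Rightarrow> (nat \<Rightarrow> complex) \<Rightarrow> pt \<Rightarrow> complex" where
  "hpoly k c = (\<lambda>(s,t). if k < 0 then 0 else (\<Sum>j\<le>nat k. c j * s ^ j * t ^ (nat k - j)))"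

definition is_section :: "int \<Rightarrow> (pt \<Rightarrow> complex) \<Rightarrow> bool" where
  "is_section k f \<longleftrightarrow> (\<exists>c. f = hpoly k c)"

definition dE :: "nat \<Rightarrow> nat \<Rightarrow> int" where
  "dE n i = (if i = 0 then 1 else int n - 1)"

text \<open>Holomorphic bundle endomorphisms of E: 2x2 matrices whose (i,j) entry is a section
of Hom(O(d_j), O(d_i)) = O(d_i - d_j).\<close>
definition is_endo :: "nat \<Rightarrow> (nat \<Rightarrow> nat \<Rightarrow> pt \<Rightarrow> complex) \<Rightarrow> bool" where
  "is_endo n M \<longleftrightarrow> (\<forall>i<2. \<forall>j<2. is_section (dE n i - dE n j) (M i j))"

definition app :: "(nat \<Rightarrow> nat \<Rightarrow> pt \<Rightarrow> complex) \<Rightarrow> pt \<Rightarrow> complex \<times> complex \<Rightarrow> complex \<times> complex" where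
  "app M z v = (M 0 0 z * fst v + M 0 1 z * snd v, M 1 0 z * fst v + M 1 1 z * snd v)"

definition is_aut :: "nat \<Rightarrow> (nat \<Rightarrow> nat \<Rightarrow> pt \<Rightarrow> complex) \<Rightarrow> bool" where
  "is_aut n M \<longleftrightarrow> is_endo n M \<and> (\<exists>N. is_endo n N \<and>
     (\<forall>z. z \<noteq> (0,0) \<longrightarrow> (\<forall>v. app N z (app M z v) = v \<and> app M z (app N z v) = v)))"

definition is_line :: "(complex \<times> complex) set \<Rightarrow> bool" where
  "is_line F \<longleftrightarrow> (\<exists>v. v \<noteq> (0,0) \<and> F = {(c * fst v, c * snd v) | c. True})"

text \<open>Holomorphic line subbundles of E of degree 1: images of nowhere vanishing bundle maps
O(1) \<rightarrow> E, i.e. pairs (a,b) of sections of O(d_0 - 1), O(d_1 - 1) with no common zero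
(every degree-1 line bundle on CP^1 is isomorphic to O(1)).\<close>
definition is_deg1_subbundle :: "nat \<Rightarrow> (pt \<Rightarrow> complex) \<Rightarrow> (pt \<Rightarrow> complex) \<Rightarrow> bool" where
  "is_deg1_subbundle n a b \<longleftrightarrow> is_section (dE n 0 - 1) a \<and> is_section (dE n 1 - 1) b \<and>
     (\<forall>z. z \<noteq> (0,0) \<longrightarrow> (a z, b z) \<noteq> (0,0))"

definition subbundle_fibre :: "(pt \<Rightarrow> complex) \<Rightarrow> (pt \<Rightarrow> complex) \<Rightarrow> pt \<Rightarrow> (complex \<times> complex) set" where
  "subbundle_fibre a b z = {(c * a z, c * b z) | c. True}"

definition good_tuple :: "nat \<Rightarrow> (nat \<Rightarrow> pt) \<Rightarrow> (nat \<Rightarrow> (complex \<times> complex) set) \<Rightarrow> bool" where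
  "good_tuple n x F \<longleftrightarrow>
     (\<forall>i<n. is_line (F i)) \<and>
     (\<forall>i<n. F i \<inter> {(0, w) | w. True} = {(0,0)}) \<and>
     \<not> (\<exists>a b. is_deg1_subbundle n a b \<and> (\<forall>i<n. F i \<subseteq> subbundle_fibre a b (x i)))"

end

theory Submission imports Defs "HOL-Computational_Algebra.Polynomial"
begin

text \<open>A line \<open>F\<^sub>i\<close> meeting \<open>O(n-1)\<close> trivially is spanned by \<open>(1, f\<^sub>i)\<close>. A degree-1
  subbundle containing all \<open>F\<^sub>i\<close> has constant nonzero \<open>O(1)\<close>-component, so it is the graph of
  a section \<open>p\<close> of \<open>O(n-2)\<close> with \<open>p(x\<^sub>i) = f\<^sub>i\<close>; condition (ii) says that the slope
  vector \<open>f\<close> is not interpolated by such a section. Lagrange interpolation at \<open>n-1\<close> of the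
  points always succeeds and a section of \<open>O(d)\<close> with more than \<open>d\<close> zeros vanishes, so the
  interpolable slope vectors form a hyperplane of \<open>\<complex>\<^sup>n\<close>. Hence admissible tuples exist, and
  for two of them with slopes \<open>f\<close>, \<open>g\<close> there are \<open>b \<noteq> 0\<close> and a section \<open>q\<close> of \<open>O(n-2)\<close>
  with \<open>q(x\<^sub>i) = g\<^sub>i - b f\<^sub>i\<close>; the automorphism \<open>(v\<^sub>1, v\<^sub>2) \<mapsto> (v\<^sub>1, q v\<^sub>1 + b v\<^sub>2)\<close>
  of \<open>E\<close> maps \<open>F\<close> to \<open>G\<close>.\<close>

lemma hpoly_nat: "hpoly (int d) c z = (\<Sum>j\<le>d. c j * fst z ^ j * snd z ^ (d - j))"
  by (cases z) (simp add: hpoly_def)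

lemma is_section_const: "is_section 0 (\<lambda>_. a)"
  unfolding is_section_def by (rule exI[of _ "\<lambda>_. a"]) (auto simp: hpoly_def)

lemma is_section_zero: "is_section k (\<lambda>_. 0)"
  unfolding is_section_def by (rule exI[of _ "\<lambda>_. 0"]) (auto simp: hpoly_def)

lemma is_section_0_imp_const: "is_section 0 f \<Longrightarrow> \<exists>a. f = (\<lambda>_. a)"
  unfolding is_section_def hpoly_def by auto

lemma is_section_cmult:
  assumes "is_section k f"
  shows "is_section k (\<lambda>z. a * f z)"
proof -
  obtain c where "f = hpoly k c" using assms unfolding is_section_def by blast
  then have "(\<lambda>z. a * f z) = hpoly k (\<lambda>j. a * c j)"
    by (auto simp: hpoly_def sum_distrib_left mult.assoc)
  then show ?thesis unfolding is_section_def by blast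
qed

lemma is_section_add:
  assumes "is_section k f" "is_section k g"
  shows "is_section k (\<lambda>z. f z + g z)"
proof -
  obtain c d where "f = hpoly k c" "g = hpoly k d" using assms unfolding is_section_def by blast
  then have "(\<lambda>z. f z + g z) = hpoly k (\<lambda>j. c j + d j)"
    by (auto simp: hpoly_def sum.distrib distrib_right)
  then show ?thesis unfolding is_section_def by blast
qed

lemma is_section_sum:
  "finite A \<Longrightarrow> (\<And>a. a \<in> A \<Longrightarrow> is_section k (f a)) \<Longrightarrow> is_section k (\<lambda>z. \<Sum>a\<in>A. f a z)"
  by (induction A rule: finite_induct) (auto intro: is_section_add is_section_zero)

lemma is_section_mult_snd:
  assumes "is_section (int d) f"
  shows "is_section (int (Suc d)) (\<lambda>z. snd z * f z)"
proof -
  obtain c where c: "f = hpoly (int d) c" using assms unfolding is_section_def by blast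
  have "snd z * f z = hpoly (int (Suc d)) (\<lambda>j. if j \<le> d then c j else 0) z" for z
  proof -
    have "hpoly (int (Suc d)) (\<lambda>j. if j \<le> d then c j else 0) z
        = (\<Sum>j\<le>d. c j * fst z ^ j * snd z ^ (Suc d - j))"
      unfolding hpoly_nat by simp
    also have "\<dots> = snd z * f z"
      by (auto simp: c hpoly_nat sum_distrib_left Suc_diff_le intro!: sum.cong)
    finally show ?thesis ..
  qed
  then show ?thesis unfolding is_section_def by blast
qed

lemma is_section_mult_fst:
  assumes "is_section (int d) f"
  shows "is_section (int (Suc d)) (\<lambda>z. fst z * f z)"
proof -
  obtain c where c: "f = hpoly (int d) c" using assms unfolding is_section_def by blast
  have "fst z * f z = hpoly (int (Suc d)) (\<lambda>j. if j = 0 then 0 else c (j - 1)) z" for z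
  proof -
    have "hpoly (int (Suc d)) (\<lambda>j. if j = 0 then 0 else c (j - 1)) z
        = (\<Sum>j\<le>d. c j * fst z ^ Suc j * snd z ^ (d - j))"
      unfolding hpoly_nat by (subst sum.atMost_Suc_shift) simp
    also have "\<dots> = fst z * f z"
      by (simp add: c hpoly_nat sum_distrib_left mult_ac)
    finally show ?thesis ..
  qed
  then show ?thesis unfolding is_section_def by blast
qed

text \<open>As a function of \<open>z\<close>, \<open>det2 z w\<close> is a section of \<open>O(1)\<close> vanishing exactly at the point
  \<open>[w]\<close>; products of these give the Lagrange basis.\<close>
definition det2 :: "pt \<Rightarrow> pt \<Rightarrow> complex" where
  "det2 z w = fst z * snd w - snd z * fst w"

lemma det2_self [simp]: "det2 z z = 0"
  by (simp add: det2_def mult.commute)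

lemma is_section_mult_det2:
  assumes "is_section (int d) f"
  shows "is_section (int (Suc d)) (\<lambda>z. det2 z w * f z)"
proof -
  have "is_section (int (Suc d)) (\<lambda>z. snd w * (fst z * f z) + (- fst w) * (snd z * f z))"
    by (intro is_section_add is_section_cmult is_section_mult_fst is_section_mult_snd assms)
  moreover have "(\<lambda>z. snd w * (fst z * f z) + (- fst w) * (snd z * f z)) = (\<lambda>z. det2 z w * f z)"
    by (auto simp: det2_def algebra_simps)
  ultimately show ?thesis by simp
qed

lemma is_section_prod_det2:
  "finite T \<Longrightarrow> is_section (int (card T)) (\<lambda>z. \<Prod>j\<in>T. det2 z (y j))"
proof (induction T rule: finite_induct)
  case empty
  then show ?case using is_section_const[of 1] by simp
next
  case (insert a T)
  then show ?case using is_section_mult_det2[OF insert.IH, of "y a"] by simp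
qed

lemma det2_eq_0_imp_proj_eq:
  assumes "z \<noteq> (0,0)" "w \<noteq> (0,0)" "det2 z w = 0"
  shows "proj_eq z w"
proof (cases "fst z = 0")
  case True
  then have "snd z \<noteq> 0" "fst w = 0" "snd w \<noteq> 0"
    using assms by (auto simp: det2_def prod_eq_iff)
  then show ?thesis unfolding proj_eq_def using True
    by (intro exI[of _ "snd w / snd z"]) (auto simp: prod_eq_iff)
next
  case False
  then have "fst w \<noteq> 0" using assms by (auto simp: det2_def prod_eq_iff)
  then show ?thesis unfolding proj_eq_def using False assms(3)
    by (intro exI[of _ "fst w / fst z"]) (auto simp: det2_def prod_eq_iff field_simps)
qed

definition distinct_points :: "(nat \<Rightarrow> pt) \<Rightarrow> nat set \<Rightarrow> bool" where
  "distinct_points x S \<longleftrightarrow>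
     (\<forall>k\<in>S. x k \<noteq> (0,0)) \<and> (\<forall>k\<in>S. \<forall>l\<in>S. k \<noteq> l \<longrightarrow> \<not> proj_eq (x k) (x l))"

lemma distinct_points_subset: "distinct_points x S \<Longrightarrow> T \<subseteq> S \<Longrightarrow> distinct_points x T"
  unfolding distinct_points_def by blast

lemma distinct_points_det2_neq_0:
  "distinct_points x S \<Longrightarrow> k \<in> S \<Longrightarrow> l \<in> S \<Longrightarrow> k \<noteq> l \<Longrightarrow> det2 (x k) (x l) \<noteq> 0"
  unfolding distinct_points_def using det2_eq_0_imp_proj_eq by blast

lemma hpoly_dehomogenize:
  assumes "snd z \<noteq> 0"
  shows "hpoly (int d) c z = snd z ^ d * poly (\<Sum>j\<le>d. monom (c j) j) (fst z / snd z)"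
proof -
  have "c j * fst z ^ j * snd z ^ (d - j) = snd z ^ d * (c j * (fst z / snd z) ^ j)"
    if "j \<le> d" for j
  proof -
    have "snd z ^ d = snd z ^ j * snd z ^ (d - j)"
      using that by (simp add: power_add[symmetric])
    then show ?thesis using assms by (simp add: power_divide field_simps)
  qed
  then have "hpoly (int d) c z = (\<Sum>j\<le>d. snd z ^ d * (c j * (fst z / snd z) ^ j))"
    unfolding hpoly_nat by (intro sum.cong) auto
  then show ?thesis
    by (simp add: poly_sum poly_monom sum_distrib_left)
qed

lemma hpoly_at_infinity: "hpoly (int d) c (s, 0) = c d * s ^ d"
proof -
  have "hpoly (int d) c (s, 0) = (\<Sum>j\<le>d. if j = d then c j * s ^ j else 0)"
    unfolding hpoly_nat by (intro sum.cong) auto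
  then show ?thesis by simp
qed

lemma distinct_points_at_infinity_unique:
  "distinct_points x S \<Longrightarrow> k \<in> S \<Longrightarrow> l \<in> S \<Longrightarrow> snd (x k) = 0 \<Longrightarrow> snd (x l) = 0 \<Longrightarrow> k = l"
  using distinct_points_det2_neq_0[of x S k l] by (auto simp: det2_def)

lemma card_affine_roots_le_degree:
  assumes "q \<noteq> 0" "distinct_points x A"
    and "\<forall>k\<in>A. snd (x k) \<noteq> 0 \<and> poly q (fst (x k) / snd (x k)) = 0"
  shows "card A \<le> degree q"
proof -
  have "inj_on (\<lambda>k. fst (x k) / snd (x k)) A"
  proof (rule inj_onI, rule ccontr)
    fix k l assume "k \<in> A" "l \<in> A" "fst (x k) / snd (x k) = fst (x l) / snd (x l)" "k \<noteq> l"
    then show False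
      using assms(3) distinct_points_det2_neq_0[OF assms(2), of k l]
      by (auto simp: det2_def field_simps)
  qed
  moreover have "(\<lambda>k. fst (x k) / snd (x k)) ` A \<subseteq> {r. poly q r = 0}" using assms(3) by auto
  ultimately have "card A \<le> card {r. poly q r = 0}"
    using poly_roots_finite[OF assms(1)] by (metis card_image card_mono)
  also have "\<dots> \<le> degree q" by (rule card_poly_roots_bound[OF assms(1)])
  finally show ?thesis .
qed

lemma is_section_vanishing_eq_0:
  assumes p: "is_section (int d) p" and "finite S" and "d < card S"
    and dp: "distinct_points x S" and zero: "\<forall>k\<in>S. p (x k) = 0"
  shows "p = (\<lambda>_. 0)"
proof -
  obtain c where c: "p = hpoly (int d) c" using p unfolding is_section_def by blast
  define q where "q = (\<Sum>j\<le>d. monom (c j) j)"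
  have coeff_q: "coeff q j = (if j \<le> d then c j else 0)" for j
    by (simp add: q_def coeff_sum coeff_monom)
  define A where "A = {k\<in>S. snd (x k) \<noteq> 0}"
  have "A \<subseteq> S" by (auto simp: A_def)
  have "q = 0"
  proof (rule ccontr)
    assume "q \<noteq> 0"
    have "poly q (fst (x k) / snd (x k)) = 0" if "k \<in> A" for k
    proof -
      have "snd (x k) ^ d * poly q (fst (x k) / snd (x k)) = 0"
        using zero that hpoly_dehomogenize[of "x k" d c] by (simp add: A_def c q_def)
      then show ?thesis using that by (simp add: A_def)
    qed
    then have card_A: "card A \<le> degree q"
      using card_affine_roots_le_degree[OF \<open>q \<noteq> 0\<close> distinct_points_subset[OF dp \<open>A \<subseteq> S\<close>]]
      by (simp add: A_def)
    have deg_q: "degree q \<le> d" by (rule degree_le) (simp add: coeff_q)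
    show False
    proof (cases "A = S")
      case True
      then show False using card_A deg_q \<open>d < card S\<close> by simp
    next
      case False
      then obtain k0 where k0: "k0 \<in> S" "snd (x k0) = 0" by (auto simp: A_def)
      \<comment> \<open>At most one point lies at infinity, and there the top coefficient must vanish.\<close>
      have "S - A \<subseteq> {k0}"
        using k0 distinct_points_at_infinity_unique[OF dp] by (auto simp: A_def)
      then have "card (S - A) \<le> 1"
        using card_mono[of "{k0}" "S - A"] by simp
      then have "card S \<le> Suc (card A)"
        using card_Diff_subset[of A S] card_mono[of S A] \<open>A \<subseteq> S\<close> \<open>finite S\<close>
          finite_subset[OF \<open>A \<subseteq> S\<close>] by linarith
      have "fst (x k0) \<noteq> 0"
        using dp k0 by (auto simp: distinct_points_def prod_eq_iff)
      moreover have "p (x k0) = c d * fst (x k0) ^ d"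
        using hpoly_at_infinity[of d c "fst (x k0)"] k0(2) by (metis c prod.collapse)
      ultimately have "coeff q d = 0" using zero k0(1) by (simp add: coeff_q)
      then have "degree q \<noteq> d" using \<open>q \<noteq> 0\<close> by auto
      then show False
        using card_A deg_q \<open>card S \<le> Suc (card A)\<close> \<open>d < card S\<close> by linarith
    qed
  qed
  then have "c j = 0" if "j \<le> d" for j using coeff_q[of j] that by simp
  then show ?thesis by (auto simp: c hpoly_nat)
qed

definition lagrange :: "(nat \<Rightarrow> pt) \<Rightarrow> nat set \<Rightarrow> (nat \<Rightarrow> complex) \<Rightarrow> pt \<Rightarrow> complex" where
  "lagrange x S v z =
     (\<Sum>k\<in>S. (v k / (\<Prod>j\<in>S-{k}. det2 (x k) (x j))) * (\<Prod>j\<in>S-{k}. det2 z (x j)))"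

lemma is_section_lagrange:
  assumes "finite S" "card S = Suc d"
  shows "is_section (int d) (lagrange x S v)"
proof -
  have "is_section (int d) (\<lambda>z. \<Prod>j\<in>S-{k}. det2 z (x j))" if "k \<in> S" for k
    using is_section_prod_det2[of "S - {k}" x] assms that by simp
  then show ?thesis
    unfolding lagrange_def[abs_def] using assms(1) by (intro is_section_sum is_section_cmult) auto
qed

lemma lagrange_at_node:
  assumes "finite S" "distinct_points x S" "i \<in> S"
  shows "lagrange x S v (x i) = v i"
proof -
  have "(\<Prod>j\<in>S-{k}. det2 (x i) (x j)) = 0" if "k \<in> S" "k \<noteq> i" for k
    using assms that by (intro prod_zero) (auto intro!: bexI[of _ i])
  moreover have "(\<Prod>j\<in>S-{i}. det2 (x i) (x j)) \<noteq> 0"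
    using assms distinct_points_det2_neq_0 by (simp add: prod_zero_iff)
  ultimately have "lagrange x S v (x i) = (\<Sum>k\<in>S. if k = i then v i else 0)"
    unfolding lagrange_def by (intro sum.cong) auto
  then show ?thesis using assms by simp
qed

lemma lagrange_diff:
  "lagrange x S (\<lambda>i. w i - b * v i) z = lagrange x S w z - b * lagrange x S v z"
  by (simp add: lagrange_def sum_subtractf sum_distrib_left diff_divide_distrib algebra_simps)

definition interpolable :: "nat \<Rightarrow> (nat \<Rightarrow> pt) \<Rightarrow> nat set \<Rightarrow> (nat \<Rightarrow> complex) \<Rightarrow> bool" where
  "interpolable d x I v \<longleftrightarrow> (\<exists>p. is_section (int d) p \<and> (\<forall>i\<in>I. p (x i) = v i))"

lemma exists_not_interpolable:
  assumes "finite I" "Suc d < card I" "distinct_points x I"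
  shows "\<exists>v. \<not> interpolable d x I v"
proof -
  obtain m where "m \<in> I" using assms(2) by fastforce
  define v where "v i = (if i = m then 1 else 0 :: complex)" for i
  have "\<not> interpolable d x I v"
  proof
    assume "interpolable d x I v"
    then obtain p where p: "is_section (int d) p" "\<forall>i\<in>I. p (x i) = v i"
      unfolding interpolable_def by blast
    have "p = (\<lambda>_. 0)"
    proof (rule is_section_vanishing_eq_0[OF p(1)])
      show "finite (I - {m})" "d < card (I - {m})" "distinct_points x (I - {m})"
        using assms \<open>m \<in> I\<close> distinct_points_subset by auto
      show "\<forall>k\<in>I - {m}. p (x k) = 0" using p(2) by (simp add: v_def)
    qed
    moreover have "p (x m) = 1" using p(2) \<open>m \<in> I\<close> by (simp add: v_def)
    ultimately show False by simp
  qed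
  then show ?thesis by blast
qed

lemma not_interpolable_proportional:
  assumes "finite I" "card I = Suc (Suc d)" "distinct_points x I"
    and "\<not> interpolable d x I v" "\<not> interpolable d x I w"
  shows "\<exists>b. b \<noteq> 0 \<and> interpolable d x I (\<lambda>i. w i - b * v i)"
proof -
  obtain m where m: "m \<in> I" using assms(2) by fastforce
  define S where "S = I - {m}"
  have S: "finite S" "card S = Suc d" "distinct_points x S"
    using assms m distinct_points_subset by (auto simp: S_def)
  \<comment> \<open>The interpolable value vectors form the kernel of the linear functional \<open>r\<close>.\<close>
  define r where "r u = u m - lagrange x S u (x m)" for u
  have interpolable_if_r: "interpolable d x I u" if r_u: "r u = 0" for u
  proof -
    have "\<forall>i\<in>I. lagrange x S u (x i) = u i"
    proof
      fix i assume "i \<in> I"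
      then show "lagrange x S u (x i) = u i"
        using r_u lagrange_at_node[OF S(1,3), of i u] by (cases "i = m") (auto simp: r_def S_def)
    qed
    then show ?thesis using is_section_lagrange[OF S(1,2)] unfolding interpolable_def by blast
  qed
  then have "r v \<noteq> 0" "r w \<noteq> 0" using assms(4,5) by blast+
  define b where "b = r w / r v"
  have "r (\<lambda>i. w i - b * v i) = r w - b * r v" by (simp add: r_def lagrange_diff algebra_simps)
  also have "\<dots> = 0" using \<open>r v \<noteq> 0\<close> by (simp add: b_def)
  finally show ?thesis
    using interpolable_if_r \<open>r v \<noteq> 0\<close> \<open>r w \<noteq> 0\<close> by (intro exI[of _ b]) (simp add: b_def)
qed

definition slope_line :: "complex \<Rightarrow> (complex \<times> complex) set" where
  "slope_line a = {(c, c * a) | c. True}"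

lemma transversal_line_iff_slope_line:
  "is_line F \<and> F \<inter> {(0, w) | w. True} = {(0,0)} \<longleftrightarrow> (\<exists>a. F = slope_line a)"
proof
  assume F: "is_line F \<and> F \<inter> {(0, w) | w. True} = {(0,0)}"
  then obtain v where v: "v \<noteq> (0,0)" "F = {(c * fst v, c * snd v) | c. True}"
    unfolding is_line_def by blast
  have "fst v \<noteq> 0"
  proof
    assume "fst v = 0"
    then have "(0, snd v) \<in> F \<inter> {(0, w) | w. True}"
      unfolding v(2) by (intro IntI CollectI exI[of _ 1] exI[of _ "snd v"]) simp_all
    then have "snd v = 0" using F by blast
    then show False using v(1) \<open>fst v = 0\<close> by (simp add: prod_eq_iff)
  qed
  have "F = slope_line (snd v / fst v)"
    unfolding v(2) slope_line_def
  proof (intro set_eqI iffI)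
    fix p assume "p \<in> {(c * fst v, c * snd v) | c. True}"
    then obtain c where "p = (c * fst v, c * snd v)" by blast
    then show "p \<in> {(c, c * (snd v / fst v)) | c. True}"
      using \<open>fst v \<noteq> 0\<close> by (intro CollectI exI[of _ "c * fst v"]) simp
  next
    fix p assume "p \<in> {(c, c * (snd v / fst v)) | c. True}"
    then obtain c where "p = (c, c * (snd v / fst v))" by blast
    then show "p \<in> {(c * fst v, c * snd v) | c. True}"
      using \<open>fst v \<noteq> 0\<close> by (intro CollectI exI[of _ "c / fst v"]) auto
  qed
  then show "\<exists>a. F = slope_line a" ..
next
  assume "\<exists>a. F = slope_line a"
  then obtain a where "F = slope_line a" ..
  moreover have "is_line (slope_line a)"
    unfolding is_line_def slope_line_def by (intro exI[of _ "(1, a)"]) auto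
  moreover have "slope_line a \<inter> {(0, w) | w. True} = {(0,0)}"
    unfolding slope_line_def by auto
  ultimately show "is_line F \<and> F \<inter> {(0, w) | w. True} = {(0,0)}" by simp
qed

lemma deg1_subbundle_through_slope_lines_iff:
  assumes "n \<ge> 2" "\<forall>i<n. F i = slope_line (f i)"
  shows "(\<exists>a b. is_deg1_subbundle n a b \<and> (\<forall>i<n. F i \<subseteq> subbundle_fibre a b (x i)))
           \<longleftrightarrow> interpolable (n - 2) x {..<n} f"
proof
  have deg: "dE n 0 - 1 = 0" "dE n 1 - 1 = int (n - 2)" using assms(1) by (auto simp: dE_def)
  {
    assume "\<exists>a b. is_deg1_subbundle n a b \<and> (\<forall>i<n. F i \<subseteq> subbundle_fibre a b (x i))"
    then obtain a b where ab: "is_deg1_subbundle n a b" "\<forall>i<n. F i \<subseteq> subbundle_fibre a b (x i)"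
      by blast
    obtain a0 where a0: "a = (\<lambda>_. a0)"
      using ab(1) is_section_0_imp_const unfolding is_deg1_subbundle_def deg by blast
    have "f i = (1 / a0) * b (x i)" if "i < n" for i
    proof -
      have "(1, f i) \<in> slope_line (f i)"
        unfolding slope_line_def by (intro CollectI exI[of _ 1]) simp
      then have "(1, f i) \<in> subbundle_fibre a b (x i)"
        using ab(2) assms(2) that by (metis subsetD)
      then obtain c where "1 = c * a0" "f i = c * b (x i)"
        unfolding subbundle_fibre_def a0 by auto
      then have "c = 1 / a0" by (metis mult.commute nonzero_eq_divide_eq mult_zero_left zero_neq_one)
      then show ?thesis using \<open>f i = c * b (x i)\<close> by simp
    qed
    moreover have "is_section (int (n - 2)) (\<lambda>z. (1 / a0) * b z)"
      using ab(1) unfolding is_deg1_subbundle_def deg by (blast intro: is_section_cmult)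
    ultimately show "interpolable (n - 2) x {..<n} f"
      unfolding interpolable_def by auto
  next
    assume "interpolable (n - 2) x {..<n} f"
    then obtain p where p: "is_section (int (n - 2)) p" "\<forall>i<n. p (x i) = f i"
      unfolding interpolable_def by auto
    have "is_deg1_subbundle n (\<lambda>_. 1) p"
      unfolding is_deg1_subbundle_def deg using p(1) is_section_const by auto
    moreover have "\<forall>i<n. F i = subbundle_fibre (\<lambda>_. 1) p (x i)"
      using assms(2) p(2) by (simp add: slope_line_def subbundle_fibre_def)
    ultimately show "\<exists>a b. is_deg1_subbundle n a b \<and> (\<forall>i<n. F i \<subseteq> subbundle_fibre a b (x i))"
      by blast
  }
qed

lemma good_tuple_slope_lines_iff:
  assumes "n \<ge> 2" "\<forall>i<n. F i = slope_line (f i)"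
  shows "good_tuple n x F \<longleftrightarrow> \<not> interpolable (n - 2) x {..<n} f"
proof -
  have "is_line (F i)" "F i \<inter> {(0, w) | w. True} = {(0,0)}" if "i < n" for i
    using transversal_line_iff_slope_line[of "F i"] assms(2) that by auto
  then show ?thesis
    by (simp add: good_tuple_def deg1_subbundle_through_slope_lines_iff[OF assms])
qed

lemma good_tuple_slopes:
  assumes "good_tuple n x F"
  shows "\<exists>f. \<forall>i<n. F i = slope_line (f i)"
proof -
  have "\<exists>a. F i = slope_line a" if "i < n" for i
    using assms that transversal_line_iff_slope_line[of "F i"] unfolding good_tuple_def by blast
  then show ?thesis by metis
qed

definition shear :: "(pt \<Rightarrow> complex) \<Rightarrow> complex \<Rightarrow> nat \<Rightarrow> nat \<Rightarrow> pt \<Rightarrow> complex" where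
  "shear q b i j z = (if i = 0 then (if j = 0 then 1 else 0) else (if j = 0 then q z else b))"

lemma is_endo_shear:
  assumes "is_section (dE n 1 - dE n 0) q"
  shows "is_endo n (shear q b)"
  unfolding is_endo_def
proof (intro allI impI)
  fix i j :: nat assume "i < 2" "j < 2"
  then consider "i = 0" "j = 0" | "i = 0" "j = 1" | "i = 1" "j = 0" | "i = 1" "j = 1"
    by fastforce
  then show "is_section (dE n i - dE n j) (shear q b i j)"
    by cases
      (simp_all add: shear_def[abs_def] assms[unfolded One_nat_def] is_section_const is_section_zero)
qed

lemma is_aut_shear:
  assumes "is_section (dE n 1 - dE n 0) q" "b \<noteq> 0"
  shows "is_aut n (shear q b)"
  unfolding is_aut_def
  using assms is_endo_shear is_section_cmult[OF assms(1), of "- 1 / b"]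
  by (intro conjI exI[of _ "shear (\<lambda>z. (- 1 / b) * q z) (1 / b)"])
    (auto simp: app_def shear_def field_simps)

lemma app_shear_slope_line: "app (shear q b) z ` slope_line a = slope_line (q z + b * a)"
  unfolding slope_line_def app_def shear_def by (auto simp: image_iff algebra_simps)

lemma good_tuple_exists:
  assumes "n \<ge> 2" "distinct_points x {..<n}"
  shows "\<exists>F. good_tuple n x F"
proof -
  have "Suc (n - 2) < card {..<n}" using assms(1) by simp
  then obtain f where "\<not> interpolable (n - 2) x {..<n} f"
    using exists_not_interpolable[OF finite_lessThan _ assms(2)] by blast
  then have "good_tuple n x (\<lambda>i. slope_line (f i))"
    using good_tuple_slope_lines_iff[OF assms(1), of "\<lambda>i. slope_line (f i)" f] by simp
  then show ?thesis by blast
qed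

lemma good_tuples_related_by_aut:
  assumes "n \<ge> 2" "distinct_points x {..<n}" "good_tuple n x F" "good_tuple n x G"
  shows "\<exists>M. is_aut n M \<and> (\<forall>i<n. G i = app M (x i) ` F i)"
proof -
  obtain f where f: "\<forall>i<n. F i = slope_line (f i)" using good_tuple_slopes[OF assms(3)] by blast
  obtain g where g: "\<forall>i<n. G i = slope_line (g i)" using good_tuple_slopes[OF assms(4)] by blast
  have "\<not> interpolable (n - 2) x {..<n} f" "\<not> interpolable (n - 2) x {..<n} g"
    using good_tuple_slope_lines_iff[OF assms(1) f] good_tuple_slope_lines_iff[OF assms(1) g]
      assms(3,4) by simp_all
  moreover have "card {..<n} = Suc (Suc (n - 2))" using assms(1) by simp
  ultimately obtain b where "b \<noteq> 0" "interpolable (n - 2) x {..<n} (\<lambda>i. g i - b * f i)"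
    using not_interpolable_proportional[OF finite_lessThan _ assms(2)] by blast
  then obtain q where q: "is_section (int (n - 2)) q" "\<forall>i<n. q (x i) = g i - b * f i"
    unfolding interpolable_def by auto
  have "dE n 1 - dE n 0 = int (n - 2)" using assms(1) by (simp add: dE_def)
  then have "is_aut n (shear q b)" using is_aut_shear q(1) \<open>b \<noteq> 0\<close> by simp
  moreover have "\<forall>i<n. G i = app (shear q b) (x i) ` F i"
    using f g q(2) by (simp add: app_shear_slope_line)
  ultimately show ?thesis by blast
qed

theorem mainTheorem2:
  fixes n :: nat and x :: "nat \<Rightarrow> complex \<times> complex"
  assumes "n \<ge> 3"
    and "\<forall>i<n. x i \<noteq> (0,0)"
    and "\<forall>i<n. \<forall>j<n. i \<noteq> j \<longrightarrow> \<not> proj_eq (x i) (x j)"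
  shows "(\<exists>F. good_tuple n x F) \<and>
         (\<forall>F G. good_tuple n x F \<and> good_tuple n x G \<longrightarrow>
            (\<exists>M. is_aut n M \<and> (\<forall>i<n. G i = app M (x i) ` F i)))"
proof -
  have "distinct_points x {..<n}" using assms(2,3) by (simp add: distinct_points_def)
  then show ?thesis
    using assms(1) good_tuple_exists good_tuples_related_by_aut by simp
qed

end
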